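(* There is an absolute constant $c>0$ such that the following holds. Let $n\ge 2$, let $d\geq(\log n)^4$, and let $G$ be a graph on $n$ vertices with average degree $d$. Then $G$ has an induced subgraph with average degree at least $\frac{c\log d}{\log n}\cdot d$ and maximum degree at most $2d^{3/2}$.
   Context: Logarithms are natural. *)

theory Defs
  imports Complex_Main
begin

definition simple_graph :: "'a set \<Rightarrow> 'a set set \<Rightarrow> bool" where
  "simple_graph V E \<longleftrightarrow> finite V \<and> (\<forall>e\<in>E. e \<subseteq> V \<and> card e = 2)"

definition induced_edges :: "'a set set \<Rightarrow> 'a set \<Rightarrow> 'a set set" where
  "induced_edges E U = {e \<in> E. e \<subseteq> U}"

definition degree_in :: "'a set \<Rightarrow> 'a set set \<Rightarrow> 'a \<Rightarrow> nat" where
  "degree_in U E v = card {u \<in> U. {u, v} \<in> E}"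

definition avg_degree :: "'a set \<Rightarrow> 'a set set \<Rightarrow> real" where
  "avg_degree V E = 2 * real (card E) / real (card V)"

definition max_degree :: "'a set \<Rightarrow> 'a set set \<Rightarrow> nat" where
  "max_degree V E = Max (insert 0 (degree_in V E ` V))"

end

theory Submission
  imports Defs
begin

definition degree_sum :: "'a set \<Rightarrow> 'a set set \<Rightarrow> nat" where
  "degree_sum X E = (\<Sum>v\<in>X. degree_in X E v)"

lemma sum_degree_in_swap:
  assumes "finite A" "finite B"
  shows "(\<Sum>a\<in>A. degree_in B E a) = (\<Sum>b\<in>B. degree_in A E b)"
proof -
  have "(\<Sum>a\<in>A. degree_in B E a) = (\<Sum>a\<in>A. \<Sum>b\<in>B. of_bool ({b, a} \<in> E))"
    using assms by (simp add: degree_in_def Int_def)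
  also have "\<dots> = (\<Sum>b\<in>B. \<Sum>a\<in>A. of_bool ({b, a} \<in> E))"
    by (rule sum.swap)
  also have "\<dots> = (\<Sum>b\<in>B. degree_in A E b)"
    using assms by (simp add: degree_in_def Int_def insert_commute)
  finally show ?thesis .
qed

lemma degree_in_mono:
  assumes "finite Y" "X \<subseteq> Y"
  shows "degree_in X E v \<le> degree_in Y E v"
  unfolding degree_in_def using assms by (intro card_mono) auto

lemma degree_in_Un:
  assumes "finite A" "finite B" "A \<inter> B = {}"
  shows "degree_in (A \<union> B) E v = degree_in A E v + degree_in B E v"
proof -
  have "{u \<in> A \<union> B. {u, v} \<in> E} = {u \<in> A. {u, v} \<in> E} \<union> {u \<in> B. {u, v} \<in> E}"
    by auto
  then show ?thesis
    unfolding degree_in_def using assms by (simp add: card_Un_disjoint disjoint_iff)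
qed

lemma degree_in_le_card:
  assumes "finite X" "\<forall>e\<in>E. card e = 2" "v \<in> X"
  shows "degree_in X E v \<le> card X - 1"
proof -
  have "{u \<in> X. {u, v} \<in> E} \<subseteq> X - {v}"
    using assms(2) by auto
  then have "degree_in X E v \<le> card (X - {v})"
    unfolding degree_in_def using assms(1) by (intro card_mono) auto
  then show ?thesis
    using assms(3) by (simp add: card_Diff_singleton_if)
qed

lemma finite_induced_edges: "finite X \<Longrightarrow> finite (induced_edges E X)"
  unfolding induced_edges_def by (rule finite_subset[of _ "Pow X"]) auto

lemma card_induced_edges_containing:
  assumes "\<forall>e\<in>E. card e = 2" "v \<in> X"
  shows "card {e \<in> induced_edges E X. v \<in> e} = degree_in X E v"
proof -
  have "bij_betw (\<lambda>u. {u, v}) {u \<in> X. {u, v} \<in> E} {e \<in> induced_edges E X. v \<in> e}"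
  proof (rule bij_betwI')
    fix x y assume "x \<in> {u \<in> X. {u, v} \<in> E}"
    then have "x \<noteq> v"
      using assms(1) by force
    then show "({x, v} = {y, v}) = (x = y)"
      by (auto simp: doubleton_eq_iff)
  next
    fix e assume e: "e \<in> {e \<in> induced_edges E X. v \<in> e}"
    then obtain u where "e = {u, v}"
      using assms(1) by (auto simp: induced_edges_def card_2_iff doubleton_eq_iff)
    with e show "\<exists>u\<in>{u \<in> X. {u, v} \<in> E}. e = {u, v}"
      by (auto simp: induced_edges_def)
  qed (use assms(2) in \<open>auto simp: induced_edges_def\<close>)
  then show ?thesis
    unfolding degree_in_def by (simp add: bij_betw_same_card)
qed

lemma degree_sum_eq_card_induced_edges:
  assumes "finite X" "\<forall>e\<in>E. card e = 2"
  shows "degree_sum X E = 2 * card (induced_edges E X)"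
proof -
  have "degree_sum X E = (\<Sum>v\<in>X. card {e \<in> induced_edges E X. v \<in> e})"
    unfolding degree_sum_def using card_induced_edges_containing[OF assms(2)] by simp
  also have "\<dots> = (\<Sum>v\<in>X. \<Sum>e\<in>induced_edges E X. of_bool (v \<in> e))"
    using finite_induced_edges[OF assms(1)] by (simp add: Int_def)
  also have "\<dots> = (\<Sum>e\<in>induced_edges E X. \<Sum>v\<in>X. of_bool (v \<in> e))"
    by (rule sum.swap)
  also have "\<dots> = (\<Sum>e\<in>induced_edges E X. 2)"
  proof (rule sum.cong)
    fix e assume "e \<in> induced_edges E X"
    then have "X \<inter> e = e" "card e = 2"
      using assms(2) by (auto simp: induced_edges_def)
    then show "(\<Sum>v\<in>X. of_bool (v \<in> e)) = (2::nat)"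
      using assms(1) by (simp add: Int_def)
  qed simp
  finally show ?thesis
    by simp
qed

lemma avg_degree_induced_edges:
  assumes "finite X" "\<forall>e\<in>E. card e = 2"
  shows "avg_degree X (induced_edges E X) = degree_sum X E / card X"
  unfolding avg_degree_def degree_sum_eq_card_induced_edges[OF assms] by simp

lemma degree_sum_remove:
  assumes "finite X" "\<forall>e\<in>E. card e = 2" "v \<in> X"
  shows "degree_sum X E = degree_sum (X - {v}) E + 2 * degree_in X E v"
proof -
  have "induced_edges E X = induced_edges E (X - {v}) \<union> {e \<in> induced_edges E X. v \<in> e}"
    by (auto simp: induced_edges_def)
  moreover have "induced_edges E (X - {v}) \<inter> {e \<in> induced_edges E X. v \<in> e} = {}"
    by (auto simp: induced_edges_def)
  ultimately have "card (induced_edges E X)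
      = card (induced_edges E (X - {v})) + card {e \<in> induced_edges E X. v \<in> e}"
    using finite_induced_edges assms(1) by (metis card_Un_disjoint finite_Un)
  then show ?thesis
    using assms card_induced_edges_containing[OF assms(2,3)]
    by (simp add: degree_sum_eq_card_induced_edges)
qed

lemma degree_sum_le_card:
  assumes "finite X" "\<forall>e\<in>E. card e = 2"
  shows "degree_sum X E \<le> card X * (card X - 1)"
proof -
  have "degree_sum X E \<le> (\<Sum>v\<in>X. card X - 1)"
    unfolding degree_sum_def using degree_in_le_card[OF assms] by (rule sum_mono)
  then show ?thesis
    by simp
qed

lemma degree_sum_Un_ge:
  assumes "finite A" "finite B" "A \<inter> B = {}"
  shows "2 * (\<Sum>a\<in>A. degree_in B E a) \<le> degree_sum (A \<union> B) E"
proof -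
  have "(\<Sum>a\<in>A. degree_in B E a) \<le> (\<Sum>a\<in>A. degree_in (A \<union> B) E a)"
    using assms by (intro sum_mono degree_in_mono) auto
  moreover have "(\<Sum>a\<in>A. degree_in B E a) \<le> (\<Sum>b\<in>B. degree_in (A \<union> B) E b)"
    unfolding sum_degree_in_swap[OF assms(1,2)] using assms by (intro sum_mono degree_in_mono) auto
  ultimately show ?thesis
    unfolding degree_sum_def using assms by (simp add: sum.union_disjoint)
qed

lemma degree_sum_split:
  assumes "finite W" "L \<subseteq> W"
  shows "degree_sum W E = degree_sum L E + degree_sum (W - L) E + 2 * (\<Sum>h\<in>W - L. degree_in L E h)"
proof -
  have fin: "finite L" "finite (W - L)" and W: "W = L \<union> (W - L)"
    using assms finite_subset by auto
  have "degree_sum W E = (\<Sum>v\<in>L. degree_in W E v) + (\<Sum>v\<in>W - L. degree_in W E v)"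
    unfolding degree_sum_def using fin by (subst W, subst sum.union_disjoint) auto
  also have "\<dots> = degree_sum L E + (\<Sum>v\<in>L. degree_in (W - L) E v)
      + (\<Sum>v\<in>W - L. degree_in L E v) + degree_sum (W - L) E"
    unfolding degree_sum_def using fin degree_in_Un[OF fin, of E] W by (simp add: sum.distrib)
  finally show ?thesis
    using sum_degree_in_swap[OF fin] by simp
qed

lemma max_degree_induced_edges_le:
  fixes B :: real
  assumes "finite U" "\<forall>v\<in>U. degree_in U E v \<le> B" "0 \<le> B"
  shows "real (max_degree U (induced_edges E U)) \<le> B"
proof -
  have "degree_in U (induced_edges E U) v \<le> degree_in U E v" for v
    unfolding degree_in_def using assms(1) by (intro card_mono) (auto simp: induced_edges_def)
  then have "\<forall>k\<in>insert 0 (degree_in U (induced_edges E U) ` U). real k \<le> B"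
    using assms(2,3) by (force intro: order_trans[OF of_nat_mono])
  moreover have "max_degree U (induced_edges E U) \<in> insert 0 (degree_in U (induced_edges E U) ` U)"
    unfolding max_degree_def using assms(1) by (intro Max_in) auto
  ultimately show ?thesis
    by blast
qed

definition multiaffine :: "(('a \<Rightarrow> real) \<Rightarrow> real) \<Rightarrow> bool" where
  "multiaffine F \<longleftrightarrow> (\<forall>p y t. F (p(y := t)) = (1 - t) * F (p(y := 0)) + t * F (p(y := 1)))"

lemma multiaffineI:
  "(\<And>p y t. F (p(y := t)) = (1 - t) * F (p(y := 0)) + t * F (p(y := 1))) \<Longrightarrow> multiaffine F"
  unfolding multiaffine_def by blast

lemma multiaffineD:
  "multiaffine F \<Longrightarrow> F (p(y := t)) = (1 - t) * F (p(y := 0)) + t * F (p(y := 1))"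
  unfolding multiaffine_def by blast

lemma multiaffine_diff:
  assumes "multiaffine F" "multiaffine G"
  shows "multiaffine (\<lambda>p. F p - G p)"
proof (rule multiaffineI)
  fix p y t
  show "F (p(y := t)) - G (p(y := t))
      = (1 - t) * (F (p(y := 0)) - G (p(y := 0))) + t * (F (p(y := 1)) - G (p(y := 1)))"
    unfolding multiaffineD[OF assms(1), of p y t] multiaffineD[OF assms(2), of p y t]
    by (simp add: algebra_simps)
qed

lemma multiaffine_scale:
  assumes "multiaffine F"
  shows "multiaffine (\<lambda>p. c * F p)"
proof (rule multiaffineI)
  fix p y t
  show "c * F (p(y := t)) = (1 - t) * (c * F (p(y := 0))) + t * (c * F (p(y := 1)))"
    unfolding multiaffineD[OF assms, of p y t] by (simp add: algebra_simps)
qed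

lemma multiaffine_divide: "multiaffine F \<Longrightarrow> multiaffine (\<lambda>p. F p / c)"
  using multiaffine_scale[of F "inverse c"] by (simp add: divide_inverse_commute)

lemma multiaffine_sum:
  assumes "\<And>a. a \<in> A \<Longrightarrow> multiaffine (F a)"
  shows "multiaffine (\<lambda>p. \<Sum>a\<in>A. F a p)"
proof (rule multiaffineI)
  fix p y t
  have "(\<Sum>a\<in>A. F a (p(y := t))) = (\<Sum>a\<in>A. (1 - t) * F a (p(y := 0)) + t * F a (p(y := 1)))"
    by (rule sum.cong[OF refl]) (rule multiaffineD[OF assms])
  then show "(\<Sum>a\<in>A. F a (p(y := t)))
      = (1 - t) * (\<Sum>a\<in>A. F a (p(y := 0))) + t * (\<Sum>a\<in>A. F a (p(y := 1)))"
    by (simp add: sum.distrib sum_distrib_left)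
qed

lemma sum_comp_fun_upd:
  fixes g :: "real \<Rightarrow> real"
  assumes "finite N"
  shows "(\<Sum>v\<in>N. g ((p(y := t)) v)) = (\<Sum>v\<in>N - {y}. g (p v)) + of_bool (y \<in> N) * g t"
proof (cases "y \<in> N")
  case True
  then show ?thesis
    using assms by (simp add: sum.remove add.commute)
next
  case False
  then show ?thesis
    by (auto intro: sum.cong)
qed

lemma multiaffine_sum_coordinates:
  assumes "finite N"
  shows "multiaffine (\<lambda>p. \<Sum>v\<in>N. p v)"
proof (rule multiaffineI)
  fix p :: "'a \<Rightarrow> real" and y t
  have "(\<Sum>v\<in>N. (p(y := u)) v) = (\<Sum>v\<in>N - {y}. p v) + of_bool (y \<in> N) * u" for u
    using sum_comp_fun_upd[OF assms, where g = "\<lambda>x. x" and t = u] by simp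
  then show "(\<Sum>v\<in>N. (p(y := t)) v) = (1 - t) * (\<Sum>v\<in>N. (p(y := 0)) v) + t * (\<Sum>v\<in>N. (p(y := 1)) v)"
    by (simp add: algebra_simps)
qed

lemma multiaffine_rounding:
  assumes "multiaffine F" "finite Y" "\<forall>y\<in>Y. 0 \<le> p y \<and> p y \<le> 1"
  shows "\<exists>q. (\<forall>y\<in>Y. q y = 0 \<or> q y = 1) \<and> (\<forall>y. y \<notin> Y \<longrightarrow> q y = p y) \<and> F p \<le> F q"
  using assms(2,3)
proof (induction Y arbitrary: p rule: finite_induct)
  case empty
  then show ?case
    by auto
next
  case (insert y Y)
  have "F p = (1 - p y) * F (p(y := 0)) + p y * F (p(y := 1))"
    using assms(1) unfolding multiaffine_def by (metis fun_upd_triv)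
  also have "\<dots> \<le> max (F (p(y := 0))) (F (p(y := 1)))"
    using insert.prems by (intro convex_bound_le) auto
  finally have "F p \<le> max (F (p(y := 0))) (F (p(y := 1)))" .
  then obtain b where b: "b = 0 \<or> b = 1" "F p \<le> F (p(y := b))"
    by (metis max_def)
  have "\<forall>z\<in>Y. 0 \<le> (p(y := b)) z \<and> (p(y := b)) z \<le> 1"
    using insert.prems insert.hyps(2) by auto
  then obtain q where q: "\<forall>z\<in>Y. q z = 0 \<or> q z = 1" "\<forall>z. z \<notin> Y \<longrightarrow> q z = (p(y := b)) z"
      "F (p(y := b)) \<le> F q"
    using insert.IH by blast
  have "q y = b"
    using q(2) insert.hyps(2) by simp
  show ?case
  proof (intro exI[of _ q] conjI)
    show "\<forall>z\<in>insert y Y. q z = 0 \<or> q z = 1"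
      using q(1) \<open>q y = b\<close> b(1) by auto
    show "\<forall>z. z \<notin> insert y Y \<longrightarrow> q z = p z"
      using q(2) by auto
    show "F p \<le> F q"
      using b(2) q(3) by linarith
  qed
qed

definition pair_mass :: "'a set \<Rightarrow> ('a \<Rightarrow> real) \<Rightarrow> real" where
  "pair_mass N p = (\<Sum>v\<in>N. p v)\<^sup>2 - (\<Sum>v\<in>N. (p v)\<^sup>2)"

lemma multiaffine_pair_mass:
  assumes "finite N"
  shows "multiaffine (pair_mass N)"
proof (rule multiaffineI)
  fix p :: "'a \<Rightarrow> real" and y t
  define c :: real where "c = of_bool (y \<in> N)"
  define s where "s = (\<Sum>v\<in>N - {y}. p v)"
  define q where "q = (\<Sum>v\<in>N - {y}. (p v)\<^sup>2)"
  have "(\<Sum>v\<in>N. (p(y := u)) v) = s + c * u" "(\<Sum>v\<in>N. ((p(y := u)) v)\<^sup>2) = q + c * u\<^sup>2" for u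
    using sum_comp_fun_upd[OF assms, where g = "\<lambda>x. x" and t = u]
      sum_comp_fun_upd[OF assms, where g = "\<lambda>x. x\<^sup>2" and t = u]
    by (simp_all add: s_def q_def c_def)
  then have eq: "pair_mass N (p(y := u)) = (s + c * u)\<^sup>2 - (q + c * u\<^sup>2)" for u
    by (simp add: pair_mass_def)
  have "c = 0 \<or> c = 1"
    by (simp add: c_def)
  then show "pair_mass N (p(y := t))
      = (1 - t) * pair_mass N (p(y := 0)) + t * pair_mass N (p(y := 1))"
    unfolding eq by (elim disjE) (simp_all add: algebra_simps power2_eq_square)
qed

lemma pair_mass_const: "pair_mass N (\<lambda>_. \<beta>) = \<beta>\<^sup>2 * ((real (card N))\<^sup>2 - real (card N))"
  by (simp add: pair_mass_def algebra_simps)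

lemma pair_mass_indicator:
  assumes "finite N" "\<forall>v\<in>N. p v = of_bool (v \<in> S)"
  shows "pair_mass N p = (real (card (N \<inter> S)))\<^sup>2 - real (card (N \<inter> S))"
proof -
  have "\<forall>v\<in>N. (p v)\<^sup>2 = p v"
    using assms(2) by simp
  then have "(\<Sum>v\<in>N. p v) = real (card (N \<inter> S))" "(\<Sum>v\<in>N. (p v)\<^sup>2) = real (card (N \<inter> S))"
    using assms by (simp_all add: Int_def)
  then show ?thesis
    by (simp add: pair_mass_def)
qed

lemma expected_neighbours_ge:
  fixes x \<beta> D :: real
  assumes "0 \<le> \<beta>" "0 \<le> x" "4 \<le> D" "\<beta> * x \<le> D / 4"
  shows "2/3 * (\<beta> * x) \<le> \<beta> * x - \<beta>\<^sup>2 * (x\<^sup>2 - x) / (D - 1)"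
proof -
  have "\<beta>\<^sup>2 * (x\<^sup>2 - x) \<le> (\<beta> * x) * (\<beta> * x)"
    using assms(1,2) by (simp add: algebra_simps power2_eq_square)
  also have "\<dots> \<le> (\<beta> * x) * ((D - 1) / 3)"
    using assms by (intro mult_left_mono) auto
  finally show ?thesis
    using assms(3) by (simp add: field_simps)
qed

lemma rounded_neighbours_le:
  fixes D :: real and k :: nat
  assumes "1 < D"
  shows "real k - ((real k)\<^sup>2 - real k) / (D - 1) \<le> (if k \<le> D then real k else 0)"
proof (cases "k \<le> D")
  case True
  have "real k \<le> (real k)\<^sup>2"
    by (cases k) (auto simp: power2_eq_square)
  then show ?thesis
    using True assms by simp
next
  case False
  then have "real k * (D - 1) \<le> real k * (real k - 1)"
    by (intro mult_left_mono) auto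
  then have "real k \<le> ((real k)\<^sup>2 - real k) / (D - 1)"
    using assms by (simp add: pos_le_divide_eq power2_eq_square algebra_simps)
  then show ?thesis
    using False by simp
qed

text \<open>If \<open>S \<subseteq> L\<close> contains each \<open>v\<close> independently with probability \<open>p v\<close>, then
  \<open>pair_mass N p\<close> is the expected value of \<open>k (k - 1)\<close> for \<open>k = card (N \<inter> S)\<close>, and the potential
  below is the expected value of \<open>\<Sum>a\<in>A. k\<^sub>a - k\<^sub>a (k\<^sub>a - 1) / (D - 1)\<close> minus \<open>c * card S\<close>.
  Each summand is at most \<open>k\<^sub>a\<close> if \<open>k\<^sub>a \<le> D\<close> and at most \<open>0\<close> otherwise.\<close>

definition neighbour_potential ::
    "'b set \<Rightarrow> 'a set \<Rightarrow> ('b \<Rightarrow> 'a set) \<Rightarrow> real \<Rightarrow> real \<Rightarrow> ('a \<Rightarrow> real) \<Rightarrow> real" where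
  "neighbour_potential A L N D c p =
     (\<Sum>a\<in>A. (\<Sum>v\<in>N a. p v) - pair_mass (N a) p / (D - 1)) - c * (\<Sum>v\<in>L. p v)"

lemma multiaffine_neighbour_potential:
  assumes "finite L" "\<forall>a\<in>A. finite (N a)"
  shows "multiaffine (neighbour_potential A L N D c)"
  unfolding neighbour_potential_def using assms
  by (intro multiaffine_diff multiaffine_sum multiaffine_scale multiaffine_divide
      multiaffine_sum_coordinates multiaffine_pair_mass) auto

lemma neighbour_potential_const_ge:
  fixes \<beta> D :: real
  assumes "0 \<le> \<beta>" "4 \<le> D" "\<forall>a\<in>A. \<beta> * card (N a) \<le> D / 4"
  shows "2/3 * \<beta> * (\<Sum>a\<in>A. card (N a)) - c * \<beta> * card L \<le> neighbour_potential A L N D c (\<lambda>_. \<beta>)"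
proof -
  have "2/3 * \<beta> * (\<Sum>a\<in>A. card (N a)) = (\<Sum>a\<in>A. 2/3 * (\<beta> * card (N a)))"
    by (simp add: sum_distrib_left mult.assoc)
  also have "\<dots> \<le> (\<Sum>a\<in>A. \<beta> * card (N a) - \<beta>\<^sup>2 * ((real (card (N a)))\<^sup>2 - real (card (N a))) / (D - 1))"
    using assms by (intro sum_mono expected_neighbours_ge) auto
  finally show ?thesis
    by (simp add: neighbour_potential_def pair_mass_const algebra_simps)
qed

lemma neighbour_potential_indicator_le:
  fixes D c :: real
  assumes "finite A" "finite L" "\<forall>a\<in>A. N a \<subseteq> L" "S \<subseteq> L" "1 < D"
    and "\<forall>v\<in>L. p v = of_bool (v \<in> S)"
  shows "neighbour_potential A L N D c p
      \<le> (\<Sum>a\<in>{a\<in>A. card (N a \<inter> S) \<le> D}. card (N a \<inter> S)) - c * card S"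
proof -
  have sum_p: "(\<Sum>v\<in>X. p v) = card (X \<inter> S)" if "X \<subseteq> L" for X
  proof -
    have "(\<Sum>v\<in>X. p v) = (\<Sum>v\<in>X. of_bool (v \<in> S))"
      using assms(6) that by (intro sum.cong) auto
    then show ?thesis
      using finite_subset[OF that assms(2)] by simp
  qed
  have "pair_mass (N a) p = (real (card (N a \<inter> S)))\<^sup>2 - real (card (N a \<inter> S))" if "a \<in> A" for a
    using pair_mass_indicator[of "N a" p S] assms(2,3,6) that finite_subset by blast
  then have "neighbour_potential A L N D c p = (\<Sum>a\<in>A. real (card (N a \<inter> S))
      - ((real (card (N a \<inter> S)))\<^sup>2 - real (card (N a \<inter> S))) / (D - 1)) - c * card S"
    unfolding neighbour_potential_def using assms(3,4) by (simp add: sum_p Int_absorb1 cong: sum.cong)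
  also have "\<dots> \<le> (\<Sum>a\<in>A. if card (N a \<inter> S) \<le> D then real (card (N a \<inter> S)) else 0) - c * card S"
    using assms(5) by (auto intro!: sum_mono rounded_neighbours_le)
  also have "\<dots> = (\<Sum>a\<in>{a\<in>A. card (N a \<inter> S) \<le> D}. real (card (N a \<inter> S))) - c * card S"
    using assms(1) by (simp add: sum.inter_filter)
  finally show ?thesis
    by simp
qed

lemma exists_subset_few_neighbours:
  fixes N :: "'b \<Rightarrow> 'a set" and \<beta> D c :: real
  assumes "finite A" "finite L" "\<forall>a\<in>A. N a \<subseteq> L" "0 \<le> \<beta>" "\<beta> \<le> 1" "4 \<le> D"
    and "\<forall>a\<in>A. \<beta> * card (N a) \<le> D / 4"
  shows "\<exists>S\<subseteq>L. 2/3 * \<beta> * (\<Sum>a\<in>A. card (N a)) - c * \<beta> * card L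
      \<le> (\<Sum>a\<in>{a\<in>A. card (N a \<inter> S) \<le> D}. card (N a \<inter> S)) - c * card S"
proof -
  have "\<forall>a\<in>A. finite (N a)"
    using assms(2,3) finite_subset by blast
  then have affine: "multiaffine (neighbour_potential A L N D c)"
    by (rule multiaffine_neighbour_potential[OF assms(2)])
  have "\<forall>v\<in>L. 0 \<le> \<beta> \<and> \<beta> \<le> 1"
    using assms(4,5) by simp
  from multiaffine_rounding[OF affine assms(2) this] obtain q where q01: "\<forall>v\<in>L. q v = 0 \<or> q v = 1"
    and q: "neighbour_potential A L N D c (\<lambda>_. \<beta>) \<le> neighbour_potential A L N D c q"
    by blast
  define S where "S = {v \<in> L. q v = 1}"
  have "S \<subseteq> L" and q_S: "\<forall>v\<in>L. q v = of_bool (v \<in> S)"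
    using q01 by (auto simp: S_def)
  have "2/3 * \<beta> * (\<Sum>a\<in>A. card (N a)) - c * \<beta> * card L \<le> neighbour_potential A L N D c q"
    using neighbour_potential_const_ge[OF assms(4,6,7)] q by (rule order_trans)
  also have "\<dots> \<le> (\<Sum>a\<in>{a\<in>A. card (N a \<inter> S) \<le> D}. card (N a \<inter> S)) - c * card S"
    using assms(6) by (intro neighbour_potential_indicator_le[OF assms(1-3) \<open>S \<subseteq> L\<close> _ q_S]) simp
  finally show ?thesis
    using \<open>S \<subseteq> L\<close> by blast
qed

lemma sum_le_twice_sum_low_degree:
  fixes x :: "'a \<Rightarrow> real" and d D :: real
  assumes "finite A" "degree_sum A E \<le> d * card A" "\<forall>a\<in>A. \<theta> < x a \<and> x a \<le> \<rho>"
    and "0 \<le> \<theta>" "\<theta> \<le> \<rho>" "0 < D" "2 * d * \<rho> \<le> \<theta> * D"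
  shows "(\<Sum>a\<in>A. x a) \<le> 2 * (\<Sum>a\<in>{a\<in>A. degree_in A E a \<le> D}. x a)"
proof -
  define R where "R = {a\<in>A. D < degree_in A E a}"
  have "R \<subseteq> A"
    by (auto simp: R_def)
  have "card R * D = (\<Sum>a\<in>R. D)"
    by simp
  also have "\<dots> \<le> (\<Sum>a\<in>A. real (degree_in A E a))"
    using assms(1) \<open>R \<subseteq> A\<close> by (intro sum_le_included[where i = id]) (auto simp: R_def)
  finally have "card R * D \<le> d * card A"
    using assms(2) by (simp add: degree_sum_def)
  have "(\<Sum>a\<in>R. x a) * D \<le> card R * \<rho> * D"
    using sum_bounded_above[of R x \<rho>] assms(3,6) \<open>R \<subseteq> A\<close> by (intro mult_right_mono) auto
  also have "\<dots> \<le> d * card A * \<rho>"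
    using mult_right_mono[OF \<open>card R * D \<le> d * card A\<close>, of \<rho>] assms(4,5) by (simp add: algebra_simps)
  also have "\<dots> \<le> (\<Sum>a\<in>A. x a) * D / 2"
  proof -
    have "card A * \<theta> \<le> (\<Sum>a\<in>A. x a)"
      using sum_bounded_below[of A \<theta> x] assms(3) by force
    then have "card A * (\<theta> * D) \<le> (\<Sum>a\<in>A. x a) * D"
      using assms(6) by (simp add: mult_right_mono mult.assoc[symmetric])
    moreover have "card A * (2 * d * \<rho>) \<le> card A * (\<theta> * D)"
      using assms(7) by (simp add: mult_left_mono)
    ultimately show ?thesis
      by (simp add: algebra_simps)
  qed
  finally have "(\<Sum>a\<in>R. x a) \<le> (\<Sum>a\<in>A. x a) / 2"
    using assms(6) by (simp add: field_simps)
  moreover have "{a\<in>A. degree_in A E a \<le> D} = A - R"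
    by (auto simp: R_def)
  ultimately show ?thesis
    using sum_diff[OF assms(1) \<open>R \<subseteq> A\<close>, of x] by simp
qed

lemma exists_bipartite_selection:
  fixes \<beta> \<rho> D c :: real
  assumes "finite A" "finite L" "\<forall>a\<in>A. degree_in L E a \<le> \<rho>"
    and "0 \<le> \<beta>" "\<beta> \<le> 1" "\<beta> * \<rho> \<le> D / 4" "4 \<le> D"
  shows "\<exists>S\<subseteq>L. 2/3 * \<beta> * (\<Sum>a\<in>A. degree_in L E a) - c * \<beta> * card L
      \<le> (\<Sum>a\<in>{a\<in>A. degree_in S E a \<le> D}. degree_in S E a) - c * card S"
proof -
  define N where "N a = {v \<in> L. {v, a} \<in> E}" for a
  have N_L: "card (N a) = degree_in L E a" for a
    by (simp add: N_def degree_in_def)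
  have N_S: "card (N a \<inter> S) = degree_in S E a" if "S \<subseteq> L" for a S
    using that by (auto simp: N_def degree_in_def intro!: arg_cong[where f = card])
  have N_sub: "\<forall>a\<in>A. N a \<subseteq> L"
    by (auto simp: N_def)
  have N_small: "\<forall>a\<in>A. \<beta> * card (N a) \<le> D / 4"
    using assms(3,4,6) mult_left_mono[of _ \<rho> \<beta>] by (fastforce simp: N_L)
  from exists_subset_few_neighbours[OF assms(1,2) N_sub assms(4,5,7) N_small, where c = c]
  obtain S where "S \<subseteq> L" and "2/3 * \<beta> * (\<Sum>a\<in>A. card (N a)) - c * \<beta> * card L
      \<le> (\<Sum>a\<in>{a\<in>A. card (N a \<inter> S) \<le> D}. card (N a \<inter> S)) - c * card S"
    by blast
  then show ?thesis
    unfolding N_L N_S[OF \<open>S \<subseteq> L\<close>] by blast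
qed

lemma degree_in_Un_le:
  fixes D :: real
  assumes "finite V" "A \<union> S \<subseteq> V" "A \<inter> S = {}"
    and "\<forall>a\<in>A. degree_in A E a \<le> D \<and> degree_in S E a \<le> D" "\<forall>v\<in>S. degree_in V E v \<le> 2 * D"
  shows "\<forall>v\<in>A \<union> S. degree_in (A \<union> S) E v \<le> 2 * D"
proof
  fix v assume "v \<in> A \<union> S"
  have fin: "finite A" "finite S"
    using assms(1,2) finite_subset by auto
  show "degree_in (A \<union> S) E v \<le> 2 * D"
  proof (cases "v \<in> S")
    case True
    then show ?thesis
      using degree_in_mono[OF assms(1,2), of E v] assms(5) by force
  next
    case False
    then show ?thesis
      using \<open>v \<in> A \<union> S\<close> assms(4) degree_in_Un[OF fin assms(3)] by force
  qed
qed

lemma dense_subgraph_from_selection: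
  fixes c D :: real
  assumes "finite V" "A \<subseteq> V" "S \<subseteq> V" "A \<inter> S = {}" "0 \<le> c"
    and "\<forall>a\<in>A. degree_in A E a \<le> D" "\<forall>v\<in>S. degree_in V E v \<le> 2 * D"
    and "c * (card A + card S) < (\<Sum>a\<in>{a\<in>A. degree_in S E a \<le> D}. degree_in S E a)"
  shows "\<exists>U\<subseteq>V. U \<noteq> {} \<and> (\<forall>v\<in>U. degree_in U E v \<le> 2 * D) \<and> 2 * c * card U \<le> degree_sum U E"
proof -
  define A' where "A' = {a\<in>A. degree_in S E a \<le> D}"
  define U where "U = A' \<union> S"
  have "finite A" "finite S" "A' \<subseteq> A" "A' \<inter> S = {}" "U \<subseteq> V"
    using assms(1-4) finite_subset by (auto simp: A'_def U_def)
  then have fin: "finite A" "finite A'" "finite S" "A' \<inter> S = {}" "A' \<subseteq> A" "U \<subseteq> V"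
    using finite_subset by auto
  have "0 \<le> c * (card A + card S)"
    using assms(5) by simp
  then have "0 < (\<Sum>a\<in>A'. real (degree_in S E a))"
    using assms(8) by (simp add: A'_def)
  then have "U \<noteq> {}"
    by (auto simp: U_def)
  have "card U \<le> card A + card S"
    using card_Un_le[of A' S] card_mono[OF fin(1,5)] by (simp add: U_def)
  then have "2 * c * card U \<le> 2 * (\<Sum>a\<in>A'. degree_in S E a)"
    using assms(5,8) mult_left_mono[of "real (card U)" "card A + card S" c] by (simp add: A'_def)
  also have "\<dots> \<le> degree_sum U E"
    unfolding U_def using of_nat_mono[OF degree_sum_Un_ge[OF fin(2-4)]] by simp
  finally have "2 * c * card U \<le> degree_sum U E" .
  moreover have "\<forall>a\<in>A'. degree_in A' E a \<le> D \<and> degree_in S E a \<le> D"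
  proof
    fix a assume "a \<in> A'"
    then show "degree_in A' E a \<le> D \<and> degree_in S E a \<le> D"
      using degree_in_mono[OF fin(1,5), of E a] assms(6) by (auto simp: A'_def)
  qed
  then have "\<forall>v\<in>U. degree_in U E v \<le> 2 * D"
    unfolding U_def using degree_in_Un_le[OF assms(1) _ fin(4) _ assms(7)] fin(6) by (simp add: U_def)
  ultimately show ?thesis
    using \<open>U \<subseteq> V\<close> \<open>U \<noteq> {}\<close> by blast
qed

lemma dense_subgraph_from_bipartite:
  fixes \<theta> \<rho> D m :: real
  assumes "finite V" "A \<subseteq> V" "L \<subseteq> V" "A \<inter> L = {}" "A \<noteq> {}"
    and "\<forall>a\<in>A. degree_in A E a \<le> D" "\<forall>v\<in>L. degree_in V E v \<le> 2 * D"
    and "\<forall>a\<in>A. \<theta> < degree_in L E a \<and> degree_in L E a \<le> \<rho>"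
    and "0 < \<theta>" "4 \<le> D" "D \<le> 4 * \<rho>" "card L \<le> m" "0 < m"
  shows "\<exists>U\<subseteq>V. U \<noteq> {} \<and> (\<forall>v\<in>U. degree_in U E v \<le> 2 * D) \<and>
      2 * min ((\<Sum>a\<in>A. degree_in L E a) / (4 * m)) (\<theta> * D / (16 * \<rho>)) * card U \<le> degree_sum U E"
proof -
  define M where "M = (\<Sum>a\<in>A. real (degree_in L E a))"
  define \<beta> where "\<beta> = D / (4 * \<rho>)"
  define c where "c = min (M / (4 * m)) (\<theta> * D / (16 * \<rho>))"
  have fin: "finite A" "finite L"
    using assms(1-3) finite_subset by auto
  have "card A * \<theta> \<le> M"
    unfolding M_def by (rule sum_bounded_below) (use assms(8) in auto)
  moreover have "0 < card A"
    using fin(1) assms(5) by (simp add: card_gt_0_iff)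
  ultimately have "0 < M"
    using assms(9) by (meson mult_pos_pos of_nat_0_less_iff order_less_le_trans)
  have "0 < \<rho>"
    using assms(5,8,9) by force
  then have \<beta>: "0 < \<beta>" "\<beta> \<le> 1" "\<beta> * \<rho> = D / 4" and "0 \<le> c" "c \<le> \<beta> * \<theta> / 4"
    using assms(9,10,11,13) \<open>0 < M\<close> by (auto simp: \<beta>_def c_def mult.commute)
  have "c * card A \<le> \<beta> * \<theta> / 4 * card A"
    using \<open>c \<le> \<beta> * \<theta> / 4\<close> by (rule mult_right_mono) simp
  also have "\<dots> = \<beta> / 4 * (card A * \<theta>)"
    by simp
  also have "\<dots> \<le> \<beta> / 4 * M"
    using \<open>card A * \<theta> \<le> M\<close> \<beta>(1) by (intro mult_left_mono) auto
  finally have "c * card A \<le> \<beta> * M / 4"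
    by simp
  have "c \<le> M / (4 * m)"
    by (simp add: c_def)
  then have "c * card L \<le> M / (4 * m) * m"
    using assms(12,13) \<open>0 < M\<close> by (intro mult_mono) auto
  then have "\<beta> * (c * card L) \<le> \<beta> * (M / 4)"
    using assms(13) \<beta>(1) by (intro mult_left_mono) auto
  moreover have deg_L: "\<forall>a\<in>A. degree_in L E a \<le> \<rho>"
    using assms(8) by auto
  from exists_bipartite_selection[OF fin deg_L less_imp_le[OF \<beta>(1)] \<beta>(2) order_eq_refl[OF \<beta>(3)] assms(10)]
  obtain S where "S \<subseteq> L" and "2/3 * \<beta> * M - c * \<beta> * card L
      \<le> (\<Sum>a\<in>{a\<in>A. degree_in S E a \<le> D}. degree_in S E a) - c * card S"
    unfolding M_def by auto
  ultimately have "c * (card A + card S) < (\<Sum>a\<in>{a\<in>A. degree_in S E a \<le> D}. degree_in S E a)"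
    using \<open>c * card A \<le> \<beta> * M / 4\<close> mult_pos_pos[OF \<beta>(1) \<open>0 < M\<close>] by (simp add: algebra_simps)
  moreover have "S \<subseteq> V" "A \<inter> S = {}" "\<forall>v\<in>S. degree_in V E v \<le> 2 * D"
    using assms(3,4,7) \<open>S \<subseteq> L\<close> by auto
  ultimately show ?thesis
    using dense_subgraph_from_selection[OF assms(1,2) _ _ \<open>0 \<le> c\<close> assms(6)] unfolding c_def M_def
    by simp
qed

definition minimally_dense :: "'a set \<Rightarrow> 'a set set \<Rightarrow> real \<Rightarrow> bool" where
  "minimally_dense W E d \<longleftrightarrow>
     W \<noteq> {} \<and> d * card W \<le> real (degree_sum W E) \<and>
     (\<forall>Y. Y \<subset> W \<longrightarrow> real (degree_sum Y E) \<le> d * card Y)"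

lemma minimally_dense_subset_sparse:
  fixes d :: real
  shows "minimally_dense W E d \<Longrightarrow> Y \<subset> W \<Longrightarrow> degree_sum Y E \<le> d * card Y"
  unfolding minimally_dense_def by blast

lemma exists_minimally_dense_subset:
  fixes d :: real
  assumes "finite V" "V \<noteq> {}" "d * card V \<le> degree_sum V E"
  shows "\<exists>W\<subseteq>V. minimally_dense W E d"
proof -
  define P where "P W \<longleftrightarrow> W \<subseteq> V \<and> W \<noteq> {} \<and> d * card W \<le> degree_sum W E" for W
  obtain W where W: "P W" and least: "\<forall>Y. P Y \<longrightarrow> card W \<le> card Y"
    using ex_has_least_nat[of P V card] assms(2,3) by (auto simp: P_def)
  have "degree_sum Y E \<le> d * card Y" if "Y \<subset> W" for Y
  proof (cases "Y = {}")
    case False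
    have "card Y < card W"
      using that W assms(1) by (intro psubset_card_mono) (auto simp: P_def intro: finite_subset)
    then have "\<not> P Y"
      using least by force
    then show ?thesis
      using False that W by (auto simp: P_def)
  qed (simp add: degree_sum_def)
  then show ?thesis
    using W by (auto simp: P_def minimally_dense_def)
qed

lemma minimally_dense_min_degree:
  fixes d :: real
  assumes "minimally_dense W E d" "finite W" "\<forall>e\<in>E. card e = 2"
    and "v \<in> W" "\<forall>u\<in>W. degree_in W E v \<le> degree_in W E u"
  shows "(real (card W) - 2) * degree_in W E v \<le> d * (real (card W) - 1)"
proof -
  have "0 < card W"
    using assms(2,4) card_gt_0_iff by blast
  have "real (card W) * degree_in W E v \<le> (\<Sum>u\<in>W. real (degree_in W E u))"
    by (rule sum_bounded_below) (use assms(5) in auto)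
  also have "\<dots> = degree_sum (W - {v}) E + 2 * real (degree_in W E v)"
    unfolding of_nat_sum[symmetric] degree_sum_def[symmetric] degree_sum_remove[OF assms(2-4)] by simp
  also have "\<dots> \<le> d * (real (card W) - 1) + 2 * real (degree_in W E v)"
  proof -
    have "W - {v} \<subset> W"
      using assms(4) by blast
    then have "degree_sum (W - {v}) E \<le> d * card (W - {v})"
      by (rule minimally_dense_subset_sparse[OF assms(1)])
    then show ?thesis
      using assms(2,4) \<open>0 < card W\<close> by (simp add: card_Diff_singleton)
  qed
  finally show ?thesis
    by (simp add: algebra_simps)
qed

lemma minimally_dense_low_degree_vertex:
  fixes d :: real
  assumes "minimally_dense W E d" "finite W" "\<forall>e\<in>E. card e = 2" "1/2 \<le> d"
  shows "\<exists>v\<in>W. degree_in W E v \<le> 2 * d"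
proof -
  obtain w where "w \<in> W"
    using assms(1) by (auto simp: minimally_dense_def)
  then obtain v where v: "v \<in> W" and min: "\<forall>u\<in>W. degree_in W E v \<le> degree_in W E u"
    using ex_has_least_nat[of "\<lambda>v. v \<in> W" w "degree_in W E"] by blast
  define n where "n = real (card W)"
  define \<delta> where "\<delta> = real (degree_in W E v)"
  have "(n - 2) * \<delta> \<le> d * (n - 1)"
    using minimally_dense_min_degree[OF assms(1-3) v min] by (simp add: n_def \<delta>_def)
  have "\<delta> \<le> 2 * d"
  proof (cases "n \<le> 2")
    case True
    have "\<delta> \<le> n - 1"
      using degree_in_le_card[OF assms(2,3) v] v assms(2) card_gt_0_iff[of W]
      by (auto simp: \<delta>_def n_def)
    then show ?thesis
      using True assms(4) by linarith
  next
    case False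
    then have "3 \<le> n"
      by (simp add: n_def)
    then have "3 * d \<le> n * d"
      using assms(4) by (intro mult_right_mono) auto
    then have "(n - 2) * \<delta> \<le> (n - 2) * (2 * d)"
      using \<open>(n - 2) * \<delta> \<le> d * (n - 1)\<close> by (simp add: algebra_simps)
    then show ?thesis
      using \<open>3 \<le> n\<close> by simp
  qed
  then show ?thesis
    using v by (auto simp: \<delta>_def)
qed

lemma minimally_dense_cross_mass:
  fixes d D :: real
  assumes "minimally_dense W E d" "finite W" "L \<subseteq> W" "L \<noteq> {}"
    and "\<forall>h\<in>W - L. 2 * D < degree_in W E h" "0 \<le> d" "4 * d \<le> D"
    and "degree_sum L E < degree_sum W E / 4"
  shows "degree_sum W E / 4 \<le> (\<Sum>h\<in>{h\<in>W - L. D / 8 < degree_in L E h}. real (degree_in L E h))"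
proof -
  define H where "H = W - L"
  define x where "x h = real (degree_in L E h)" for h
  define s where "s = real (degree_sum W E)"
  define Hi where "Hi = {h\<in>H. D / 8 < x h}"
  define Lo where "Lo = {h\<in>H. x h \<le> D / 8}"
  have fin: "finite H" "finite Hi" "finite Lo" "Lo \<subseteq> H"
    using assms(2) by (auto simp: H_def Hi_def Lo_def)
  have "card H * (2 * D) \<le> (\<Sum>h\<in>H. real (degree_in W E h))"
    by (rule sum_bounded_below) (use assms(5) in \<open>auto simp: H_def less_imp_le\<close>)
  also have "\<dots> \<le> s"
    unfolding s_def degree_sum_def H_def using assms(2) by (simp add: sum_mono2)
  finally have H_small: "card H * (2 * D) \<le> s" .
  have "H \<subset> W"
    using assms(3,4) by (auto simp: H_def)
  then have "degree_sum H E \<le> d * card H"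
    by (rule minimally_dense_subset_sparse[OF assms(1)])
  also have "\<dots> \<le> s / 8"
    using H_small mult_left_mono[OF assms(7), of "card H"] by (simp add: algebra_simps)
  finally have "5 * s / 16 \<le> (\<Sum>h\<in>H. x h)"
    using degree_sum_split[OF assms(2,3), of E] assms(8) by (simp add: s_def x_def H_def)
  moreover have "(\<Sum>h\<in>H. x h) = (\<Sum>h\<in>Hi. x h) + (\<Sum>h\<in>Lo. x h)"
    using fin by (subst sum.union_disjoint[symmetric]) (auto simp: Hi_def Lo_def intro: sum.cong)
  moreover have "(\<Sum>h\<in>Lo. x h) \<le> s / 16"
  proof -
    have "(\<Sum>h\<in>Lo. x h) \<le> card Lo * (D / 8)"
      by (rule sum_bounded_above) (simp add: Lo_def)
    also have "\<dots> \<le> card H * (D / 8)"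
      using card_mono[OF fin(1,4)] assms(6,7) by (intro mult_right_mono) auto
    finally show ?thesis
      using H_small by simp
  qed
  ultimately show ?thesis
    by (simp add: s_def Hi_def H_def x_def)
qed

lemma exists_threshold_step:
  fixes b :: "nat \<Rightarrow> real"
  shows "b 0 < x \<Longrightarrow> x \<le> b T \<Longrightarrow> \<exists>t<T. b t < x \<and> x \<le> b (Suc t)"
proof (induction T)
  case (Suc T)
  then show ?case
    by (cases "x \<le> b T") (auto intro: less_SucI)
qed simp

lemma pigeonhole_threshold_classes:
  fixes x :: "'a \<Rightarrow> real" and b :: "nat \<Rightarrow> real"
  assumes "finite H" "\<forall>h\<in>H. 0 \<le> x h \<and> x h \<le> b T" "0 < T"
  shows "\<exists>t<T. (\<Sum>h\<in>{h\<in>H. b 0 < x h}. x h) \<le> T * (\<Sum>h\<in>{h\<in>H. b t < x h \<and> x h \<le> b (Suc t)}. x h)"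
proof -
  define C where "C t = (\<Sum>h\<in>{h\<in>H. b t < x h \<and> x h \<le> b (Suc t)}. x h)" for t
  define y where "y h t = (if b t < x h \<and> x h \<le> b (Suc t) then x h else 0)" for h t
  have y: "0 \<le> y h t" if "h \<in> H" for h t
    using assms(2) that by (simp add: y_def)
  have "x h \<le> (\<Sum>t<T. y h t)" if h: "h \<in> H" "b 0 < x h" for h
  proof -
    obtain t where "t < T" "b t < x h \<and> x h \<le> b (Suc t)"
      using exists_threshold_step[of b "x h" T] assms(2) h by blast
    then show ?thesis
      using member_le_sum[of t "{..<T}" "y h"] y[OF h(1)] by (simp add: y_def)
  qed
  then have "(\<Sum>h\<in>{h\<in>H. b 0 < x h}. x h) \<le> (\<Sum>h\<in>{h\<in>H. b 0 < x h}. \<Sum>t<T. y h t)"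
    by (intro sum_mono) auto
  also have "\<dots> \<le> (\<Sum>h\<in>H. \<Sum>t<T. y h t)"
    using assms(1) y by (intro sum_mono2) (auto intro: sum_nonneg)
  also have "\<dots> = (\<Sum>t<T. C t)"
    using assms(1) by (subst sum.swap) (simp add: C_def y_def sum.inter_filter)
  also obtain t where "t < T" "\<forall>s<T. C s \<le> C t"
    using Max_in[of "C ` {..<T}"] Max_ge[of "C ` {..<T}"] assms(3) by fastforce
  then have "(\<Sum>s<T. C s) \<le> T * C t"
    using sum_bounded_above[of "{..<T}" C "C t"] by simp
  finally show ?thesis
    using \<open>t < T\<close> by (auto simp: C_def)
qed

lemma dense_subgraph_from_class:
  fixes d D \<theta> r m :: real
  assumes "finite W" "A \<subseteq> W" "L \<subseteq> W" "A \<inter> L = {}" "A \<noteq> {}" "degree_sum A E \<le> d * card A"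
    and "\<forall>v\<in>L. degree_in W E v \<le> 2 * D"
    and "\<forall>a\<in>A. \<theta> < degree_in L E a \<and> degree_in L E a \<le> r * \<theta>"
    and "0 < \<theta>" "2 * d * r \<le> D" "4 \<le> D" "D \<le> 4 * (r * \<theta>)" "card L \<le> m" "0 < m"
  shows "\<exists>U\<subseteq>W. U \<noteq> {} \<and> (\<forall>v\<in>U. degree_in U E v \<le> 2 * D) \<and>
      min ((\<Sum>a\<in>A. degree_in L E a) / (4 * m)) (D / (8 * r)) * card U \<le> degree_sum U E"
proof -
  define A' where "A' = {a\<in>A. degree_in A E a \<le> D}"
  define M where "M = (\<Sum>a\<in>A. real (degree_in L E a))"
  have fin: "finite A" and "A' \<subseteq> A"
    using assms(1,2) finite_subset by (auto simp: A'_def)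
  have "\<theta> \<le> r * \<theta>"
    using assms(5,8) by force
  moreover have "2 * d * (r * \<theta>) \<le> \<theta> * D"
    using mult_right_mono[OF assms(10), of \<theta>] assms(9) by (simp add: algebra_simps)
  ultimately have "M \<le> 2 * (\<Sum>a\<in>A'. real (degree_in L E a))"
    using sum_le_twice_sum_low_degree[OF fin assms(6,8)] assms(9,11) by (simp add: M_def A'_def)
  moreover have "0 < M"
    unfolding M_def using fin assms(5,8,9) by (intro sum_pos) force+
  ultimately have "A' \<noteq> {}"
    by auto
  have "\<forall>a\<in>A'. degree_in A' E a \<le> D"
    using degree_in_mono[OF fin \<open>A' \<subseteq> A\<close>] by (auto simp: A'_def intro: order_trans[OF of_nat_mono])
  moreover have "A' \<subseteq> W" "A' \<inter> L = {}" "\<forall>a\<in>A'. \<theta> < degree_in L E a \<and> degree_in L E a \<le> r * \<theta>"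
    using \<open>A' \<subseteq> A\<close> assms(2,4,8) by auto
  ultimately obtain U where "U \<subseteq> W" "U \<noteq> {}" "\<forall>v\<in>U. degree_in U E v \<le> 2 * D"
    and U: "2 * min ((\<Sum>a\<in>A'. degree_in L E a) / (4 * m)) (\<theta> * D / (16 * (r * \<theta>))) * card U
      \<le> degree_sum U E"
    using dense_subgraph_from_bipartite[OF assms(1) _ assms(3) _ \<open>A' \<noteq> {}\<close> _ assms(7) _ assms(9,11-14)]
    by metis
  have "\<theta> * D / (16 * (r * \<theta>)) = D / (16 * r)"
    using assms(9) by simp
  moreover have "M / (4 * m) \<le> 2 * ((\<Sum>a\<in>A'. degree_in L E a) / (4 * m))"
    using divide_right_mono[OF \<open>M \<le> 2 * _\<close>, of "4 * m"] assms(14) by simp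
  ultimately have "min (M / (4 * m)) (D / (8 * r))
      \<le> 2 * min ((\<Sum>a\<in>A'. degree_in L E a) / (4 * m)) (\<theta> * D / (16 * (r * \<theta>)))"
    by (simp add: min_def)
  then have "min (M / (4 * m)) (D / (8 * r)) * card U \<le> degree_sum U E"
    using order_trans[OF mult_right_mono[OF _ of_nat_0_le_iff] U] by blast
  then show ?thesis
    using \<open>U \<subseteq> W\<close> \<open>U \<noteq> {}\<close> \<open>\<forall>v\<in>U. degree_in U E v \<le> 2 * D\<close>
    by (intro exI[of _ U]) (simp add: M_def)
qed

lemma minimally_dense_heavy_class:
  fixes d D r :: real
  assumes "minimally_dense W E d" "finite W" "L = {v\<in>W. degree_in W E v \<le> 2 * D}" "L \<noteq> {}"
    and "0 \<le> d" "4 * d \<le> D" "1 \<le> r" "card W \<le> D / 8 * r ^ T" "0 < T"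
    and "degree_sum L E < degree_sum W E / 4"
  shows "\<exists>\<theta>::real. D / 8 \<le> \<theta> \<and> d * card W \<le> 4 * T *
      (\<Sum>h\<in>{h\<in>W - L. \<theta> < degree_in L E h \<and> degree_in L E h \<le> r * \<theta>}. real (degree_in L E h))"
proof -
  have "L \<subseteq> W" "\<forall>h\<in>W - L. 2 * D < degree_in W E h"
    using assms(3) by auto
  then have "degree_sum W E / 4 \<le> (\<Sum>h\<in>{h\<in>W - L. D / 8 * r ^ 0 < degree_in L E h}. real (degree_in L E h))"
    using minimally_dense_cross_mass[OF assms(1,2) _ assms(4) _ assms(5,6,10)] by simp
  moreover have "\<forall>h\<in>W - L. 0 \<le> real (degree_in L E h) \<and> real (degree_in L E h) \<le> D / 8 * r ^ T"
  proof
    fix h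
    have "degree_in L E h \<le> card W"
      unfolding degree_in_def using assms(2) \<open>L \<subseteq> W\<close> by (intro card_mono) auto
    then show "0 \<le> real (degree_in L E h) \<and> real (degree_in L E h) \<le> D / 8 * r ^ T"
      using assms(8) by simp
  qed
  ultimately obtain t where pig: "degree_sum W E / 4 \<le> T * (\<Sum>h\<in>{h\<in>W - L. D / 8 * r ^ t < degree_in L E h
      \<and> degree_in L E h \<le> D / 8 * r ^ Suc t}. real (degree_in L E h))"
    using pigeonhole_threshold_classes[of "W - L" "\<lambda>h. real (degree_in L E h)" "\<lambda>t. D / 8 * r ^ t" T]
      assms(2,9) by (meson finite_Diff order_trans)
  define \<theta> where "\<theta> = D / 8 * r ^ t"
  have "D / 8 * r ^ Suc t = r * \<theta>"
    by (simp add: \<theta>_def)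
  then have "degree_sum W E \<le> 4 * T *
      (\<Sum>h\<in>{h\<in>W - L. \<theta> < degree_in L E h \<and> degree_in L E h \<le> r * \<theta>}. real (degree_in L E h))"
    using pig unfolding \<theta>_def[symmetric] \<open>D / 8 * r ^ Suc t = r * \<theta>\<close> by simp
  moreover have "D / 8 * 1 \<le> \<theta>"
    unfolding \<theta>_def using one_le_power[OF assms(7)] assms(5,6) by (intro mult_left_mono) auto
  moreover have "d * card W \<le> degree_sum W E"
    using assms(1) by (simp add: minimally_dense_def)
  ultimately show ?thesis
    by (intro exI[of _ \<theta>]) simp
qed

lemma minimally_dense_crossing_case:
  fixes d D r :: real
  assumes "minimally_dense W E d" "finite W" "L = {v\<in>W. degree_in W E v \<le> 2 * D}" "L \<noteq> {}"
    and "1 \<le> d" "2 \<le> r" "2 * d * r \<le> D" "card W \<le> D / 8 * r ^ T" "0 < T"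
    and "degree_sum L E < degree_sum W E / 4"
  shows "\<exists>U\<subseteq>W. U \<noteq> {} \<and> (\<forall>v\<in>U. degree_in U E v \<le> 2 * D) \<and> d / (16 * real T) * card U \<le> degree_sum U E"
proof -
  have "2 * d * 2 \<le> 2 * d * r"
    using assms(5,6) by (intro mult_left_mono) auto
  then have "4 * d \<le> D"
    using assms(7) by simp
  then obtain \<theta> :: real where "D / 8 \<le> \<theta>" and heavy: "d * card W \<le> 4 * T *
      (\<Sum>h\<in>{h\<in>W - L. \<theta> < degree_in L E h \<and> degree_in L E h \<le> r * \<theta>}. real (degree_in L E h))"
    using minimally_dense_heavy_class[OF assms(1-4) _ _ _ assms(8-10)] assms(5,6) by force
  define A where "A = {h\<in>W - L. \<theta> < degree_in L E h \<and> degree_in L E h \<le> r * \<theta>}"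
  define M where "M = (\<Sum>a\<in>A. real (degree_in L E a))"
  have "A \<subset> W" "L \<subseteq> W" "A \<inter> L = {}" "0 < card W"
    using assms(2-4) by (auto simp: A_def card_gt_0_iff)
  have "0 < M"
  proof (rule ccontr)
    assume "\<not> 0 < M"
    then have "4 * T * M \<le> 0"
      by (simp add: mult_nonneg_nonpos)
    moreover have "0 < d * card W"
      using \<open>0 < card W\<close> assms(5) by simp
    ultimately show False
      using heavy by (simp add: A_def M_def)
  qed
  then have "A \<noteq> {}"
    by (auto simp: M_def)
  have "0 < \<theta>" "4 \<le> D"
    using \<open>D / 8 \<le> \<theta>\<close> \<open>4 * d \<le> D\<close> assms(5) by auto
  then have "D \<le> 4 * (r * \<theta>)"
    using mult_right_mono[OF assms(6) less_imp_le[OF \<open>0 < \<theta>\<close>]] \<open>D / 8 \<le> \<theta>\<close> by linarith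
  have L_deg: "\<forall>v\<in>L. degree_in W E v \<le> 2 * D" and "real (card L) \<le> real (card W)"
    and A_deg: "\<forall>a\<in>A. \<theta> < degree_in L E a \<and> degree_in L E a \<le> r * \<theta>"
    using card_mono[OF assms(2) \<open>L \<subseteq> W\<close>] by (auto simp: assms(3) A_def)
  from dense_subgraph_from_class[OF assms(2) psubset_imp_subset[OF \<open>A \<subset> W\<close>] \<open>L \<subseteq> W\<close> \<open>A \<inter> L = {}\<close>
      \<open>A \<noteq> {}\<close> minimally_dense_subset_sparse[OF assms(1) \<open>A \<subset> W\<close>] L_deg A_deg \<open>0 < \<theta>\<close> assms(7)
      \<open>4 \<le> D\<close> \<open>D \<le> 4 * (r * \<theta>)\<close> \<open>real (card L) \<le> real (card W)\<close>] \<open>0 < card W\<close>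
  obtain U where "U \<subseteq> W" "U \<noteq> {}" "\<forall>v\<in>U. degree_in U E v \<le> 2 * D"
    and U: "min (M / (4 * real (card W))) (D / (8 * r)) * card U \<le> degree_sum U E"
    unfolding M_def by auto
  have "d / (16 * real T) \<le> M / (4 * real (card W))"
    using heavy \<open>0 < card W\<close> assms(9) by (simp add: field_simps A_def M_def)
  moreover have "d / (16 * real T) \<le> D / (8 * r)"
  proof -
    have "d / (16 * real T) \<le> d / 4"
      using assms(5,9) by (intro divide_left_mono) auto
    also have "\<dots> = 2 * d * r / (8 * r)"
      using assms(6) by simp
    also have "\<dots> \<le> D / (8 * r)"
      using assms(6,7) by (intro divide_right_mono) auto
    finally show ?thesis .
  qed
  ultimately have "d / (16 * real T) * card U \<le> min (M / (4 * real (card W))) (D / (8 * r)) * card U"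
    by (intro mult_right_mono) auto
  then show ?thesis
    using U \<open>U \<subseteq> W\<close> \<open>U \<noteq> {}\<close> \<open>\<forall>v\<in>U. degree_in U E v \<le> 2 * D\<close> by (meson order_trans)
qed

lemma minimally_dense_subgraph_bounded_degree:
  fixes d D r :: real
  assumes "minimally_dense W E d" "finite W" "\<forall>e\<in>E. card e = 2"
    and "1 \<le> d" "2 \<le> r" "2 * d * r \<le> D" "card W \<le> D / 8 * r ^ T" "0 < T"
  shows "\<exists>U\<subseteq>W. U \<noteq> {} \<and> (\<forall>v\<in>U. degree_in U E v \<le> 2 * D) \<and> d / (16 * real T) * card U \<le> degree_sum U E"
proof -
  define L where "L = {v\<in>W. degree_in W E v \<le> 2 * D}"
  have "2 * d * 1 \<le> 2 * d * r"
    using assms(4,5) by (intro mult_left_mono) auto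
  moreover obtain v where "v \<in> W" "degree_in W E v \<le> 2 * d"
    using minimally_dense_low_degree_vertex[OF assms(1-3)] assms(4) by auto
  ultimately have "L \<noteq> {}"
    using assms(6) by (auto simp: L_def)
  show ?thesis
  proof (cases "degree_sum L E < degree_sum W E / 4")
    case True
    then show ?thesis
      using minimally_dense_crossing_case[OF assms(1,2) L_def \<open>L \<noteq> {}\<close> assms(4-8)] by blast
  next
    case False
    have "L \<subseteq> W"
      by (simp add: L_def)
    have "d / (16 * real T) * card L \<le> d / 4 * card W"
      using card_mono[OF assms(2) \<open>L \<subseteq> W\<close>] assms(4,8) by (intro mult_mono divide_left_mono) auto
    also have "\<dots> \<le> degree_sum L E"
      using False assms(1) by (simp add: minimally_dense_def)
    finally have "d / (16 * real T) * card L \<le> degree_sum L E" .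
    moreover have "degree_in L E v \<le> 2 * D" if "v \<in> L" for v
      using degree_in_mono[OF assms(2) \<open>L \<subseteq> W\<close>, of E v] that by (simp add: L_def)
    ultimately show ?thesis
      using \<open>L \<noteq> {}\<close> \<open>L \<subseteq> W\<close> by blast
  qed
qed

lemma ceiling_log_ratio_bounds:
  fixes d n :: real
  assumes "16 \<le> d" "d < n"
  defines "T \<equiv> nat \<lceil>4 * ln n / ln d\<rceil>"
  shows "0 < T" "n \<le> sqrt (sqrt d) ^ T" "d * ln d / (80 * ln n) \<le> d / (16 * real T)"
proof -
  have "0 < ln d" "ln d < ln n"
    using assms(1,2) by auto
  then have "4 < 4 * ln n / ln d"
    by (simp add: field_simps)
  then have "real T = of_int \<lceil>4 * ln n / ln d\<rceil>"
    unfolding T_def by (intro of_nat_nat) linarith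
  then have T: "4 * ln n / ln d \<le> T" "T \<le> 4 * ln n / ln d + 1"
    by simp_all
  then show "0 < T"
    using \<open>4 < 4 * ln n / ln d\<close> by linarith
  have "ln n \<le> T * (ln d / 4)"
    using T(1) \<open>0 < ln d\<close> by (simp add: field_simps)
  also have "\<dots> = ln (sqrt (sqrt d) ^ T)"
    using assms(1) by (simp add: ln_realpow ln_sqrt)
  finally show "n \<le> sqrt (sqrt d) ^ T"
    using assms(1,2) by simp
  have "T * ln d \<le> 5 * ln n"
    using T(2) \<open>0 < ln d\<close> \<open>ln d < ln n\<close> by (simp add: field_simps)
  then have "T * ln d / (5 * ln n) \<le> 1"
    using \<open>0 < ln d\<close> \<open>ln d < ln n\<close> by simp
  then have "d / (16 * real T) * (T * ln d / (5 * ln n)) \<le> d / (16 * real T)"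
    using assms(1) by (intro mult_left_le) auto
  then show "d * ln d / (80 * ln n) \<le> d / (16 * real T)"
    using \<open>0 < T\<close> by (simp add: field_simps)
qed

lemma fourth_root_bounds:
  fixes d :: real
  assumes "16 \<le> d"
  shows "2 \<le> sqrt (sqrt d)" "2 * d * sqrt (sqrt d) \<le> d powr (3/2)" "8 \<le> d powr (3/2)"
proof -
  define r where "r = sqrt (sqrt d)"
  have "d powr (3/2) = d powr (1 + 1/2)"
    by simp
  also have "\<dots> = d * (r * r)"
    using assms unfolding powr_add by (simp add: powr_half_sqrt r_def)
  finally have D: "d powr (3/2) = d * (r * r)" .
  have "2 \<le> r"
    unfolding r_def using assms by (intro real_le_rsqrt) (simp add: real_le_rsqrt)
  have "2 * 2 \<le> r * r"
    using \<open>2 \<le> r\<close> by (intro mult_mono) auto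
  then have "16 * (2 * 2) \<le> d * (r * r)"
    using assms \<open>2 \<le> r\<close> by (intro mult_mono) auto
  moreover have "d * r * 2 \<le> d * r * r"
    using \<open>2 \<le> r\<close> assms by (intro mult_left_mono) auto
  ultimately show "2 \<le> sqrt (sqrt d)" "2 * d * sqrt (sqrt d) \<le> d powr (3/2)" "8 \<le> d powr (3/2)"
    using \<open>2 \<le> r\<close> unfolding D r_def[symmetric] by (simp_all add: algebra_simps)
qed

lemma avg_degree_less_card:
  assumes "simple_graph V E" "V \<noteq> {}"
  shows "avg_degree V E < card V"
proof -
  have fin: "finite V" and two: "\<forall>e\<in>E. card e = 2" and "induced_edges E V = E"
    using assms(1) by (auto simp: simple_graph_def induced_edges_def)
  then have "avg_degree V E = degree_sum V E / card V"
    using avg_degree_induced_edges[OF fin two] by simp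
  also have "\<dots> \<le> real (card V * (card V - 1)) / card V"
    using of_nat_mono[OF degree_sum_le_card[OF fin two]] by (rule divide_right_mono) simp
  also have "\<dots> = real (card V) - 1"
    using fin assms(2) by (simp add: card_gt_0_iff Suc_le_eq)
  also have "\<dots> < card V"
    by simp
  finally show ?thesis .
qed

lemma avg_degree_induced_edges_ge:
  fixes c :: real
  assumes "finite U" "U \<noteq> {}" "\<forall>e\<in>E. card e = 2" "c * card U \<le> degree_sum U E"
  shows "c \<le> avg_degree U (induced_edges E U)"
  using assms by (simp add: avg_degree_induced_edges pos_le_divide_eq card_gt_0_iff)

lemma dense_induced_subgraph_bounded_degree:
  fixes d :: real
  assumes "simple_graph V E" "16 \<le> d" "d \<le> avg_degree V E"
  shows "\<exists>U\<subseteq>V. U \<noteq> {} \<and> d * ln d / (80 * ln (card V)) \<le> avg_degree U (induced_edges E U)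
      \<and> max_degree U (induced_edges E U) \<le> 2 * d powr (3/2)"
proof -
  define n where "n = real (card V)"
  define r where "r = sqrt (sqrt d)"
  define T where "T = nat \<lceil>4 * ln n / ln d\<rceil>"
  have fin: "finite V" and two: "\<forall>e\<in>E. card e = 2" and "induced_edges E V = E"
    using assms(1) by (auto simp: simple_graph_def induced_edges_def)
  then have avg: "avg_degree V E = degree_sum V E / n"
    using avg_degree_induced_edges[OF fin two] by (simp add: n_def)
  then have "V \<noteq> {}" "0 < n"
    using assms(2,3) fin by (auto simp: n_def card_gt_0_iff)
  have "d < n"
    using avg_degree_less_card[OF assms(1) \<open>V \<noteq> {}\<close>] assms(3) by (simp add: n_def)
  have "d * card V \<le> degree_sum V E"
    using assms(3) avg \<open>0 < n\<close> by (simp add: n_def pos_le_divide_eq)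
  obtain W where "W \<subseteq> V" and W: "minimally_dense W E d"
    using exists_minimally_dense_subset[OF fin \<open>V \<noteq> {}\<close> \<open>d * card V \<le> _\<close>] by blast
  have "real (card W) \<le> 1 * r ^ T"
    using card_mono[OF fin \<open>W \<subseteq> V\<close>] ceiling_log_ratio_bounds(2)[OF assms(2) \<open>d < n\<close>]
    by (simp add: n_def r_def T_def)
  also have "\<dots> \<le> d powr (3/2) / 8 * r ^ T"
    using fourth_root_bounds[OF assms(2)] assms(2) by (intro mult_right_mono) (auto simp: r_def)
  finally have "card W \<le> d powr (3/2) / 8 * r ^ T" .
  moreover have "0 < T" "1 \<le> d"
    using ceiling_log_ratio_bounds(1)[OF assms(2) \<open>d < n\<close>] assms(2) by (simp_all add: T_def)
  ultimately obtain U where "U \<subseteq> W" "U \<noteq> {}" "\<forall>v\<in>U. degree_in U E v \<le> 2 * d powr (3/2)"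
    and U: "d / (16 * real T) * card U \<le> degree_sum U E"
    using minimally_dense_subgraph_bounded_degree[OF W finite_subset[OF \<open>W \<subseteq> V\<close> fin] two _
        fourth_root_bounds(1,2)[OF assms(2), folded r_def]] by blast
  have "U \<subseteq> V"
    using \<open>U \<subseteq> W\<close> \<open>W \<subseteq> V\<close> by blast
  then have "finite U"
    using fin finite_subset by blast
  moreover have "d * ln d / (80 * ln (card V)) \<le> d / (16 * real T)"
    using ceiling_log_ratio_bounds(3)[OF assms(2) \<open>d < n\<close>] by (simp add: n_def T_def)
  ultimately show ?thesis
    using avg_degree_induced_edges_ge[OF \<open>finite U\<close> \<open>U \<noteq> {}\<close> two U] \<open>U \<noteq> {}\<close> \<open>U \<subseteq> V\<close>
      max_degree_induced_edges_le[OF \<open>finite U\<close> \<open>\<forall>v\<in>U. _\<close>] by (intro exI[of _ U]) auto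
qed

lemma singleton_induced_subgraph:
  assumes "\<forall>e\<in>E. card e = 2"
  shows "avg_degree {v} (induced_edges E {v}) = 0" "max_degree {v} (induced_edges E {v}) = 0"
proof -
  have "e \<notin> E" if "e \<subseteq> {v}" for e
  proof
    assume "e \<in> E"
    then have "card e = 2"
      using assms by blast
    moreover have "card e \<le> 1"
      using card_mono[of "{v}" e] that by simp
    ultimately show False
      by simp
  qed
  then have "induced_edges E {v} = {}"
    by (auto simp: induced_edges_def)
  then show "avg_degree {v} (induced_edges E {v}) = 0" "max_degree {v} (induced_edges E {v}) = 0"
    by (simp_all add: avg_degree_def max_degree_def degree_in_def)
qed

lemma edge_induced_subgraph:
  assumes "\<forall>e\<in>E. card e = 2" "e \<in> E"
  shows "avg_degree e (induced_edges E e) = 1" "max_degree e (induced_edges E e) \<le> 1"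
proof -
  have "card e = 2" "finite e"
    using assms by (auto intro: card_ge_0_finite)
  then have "e' = e" if "e' \<in> E" "e' \<subseteq> e" for e'
    using card_subset_eq[OF _ that(2)] assms that(1) by simp
  then have "induced_edges E e = {e}"
    using assms(2) by (auto simp: induced_edges_def)
  then show "avg_degree e (induced_edges E e) = 1"
    using \<open>card e = 2\<close> by (simp add: avg_degree_def)
  have "\<forall>v\<in>e. real (degree_in e E v) \<le> 1"
    using degree_in_le_card[OF \<open>finite e\<close> assms(1)] \<open>card e = 2\<close> by simp
  then show "max_degree e (induced_edges E e) \<le> 1"
    using max_degree_induced_edges_le[OF \<open>finite e\<close>, of E 1] by simp
qed

lemma sparse_induced_subgraph_bounded_degree:
  fixes d :: real
  assumes "simple_graph V E" "2 \<le> card V" "avg_degree V E = d" "d < 16"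
  shows "\<exists>U\<subseteq>V. U \<noteq> {} \<and> d * ln d / (80 * ln (card V)) \<le> avg_degree U (induced_edges E U)
      \<and> max_degree U (induced_edges E U) \<le> 2 * d powr (3/2)"
proof -
  have two: "\<forall>e\<in>E. card e = 2" and "0 < ln (card V)" "0 \<le> d" "V \<noteq> {}"
    using assms by (auto simp: simple_graph_def avg_degree_def)
  show ?thesis
  proof (cases "d \<le> 1")
    case True
    then have "d * ln d / (80 * ln (card V)) \<le> 0"
      using \<open>0 < ln (card V)\<close> \<open>0 \<le> d\<close> ln_le_zero_iff[of d]
      by (cases "d = 0") (auto simp: divide_nonpos_pos mult_nonneg_nonpos)
    moreover obtain v where "v \<in> V"
      using \<open>V \<noteq> {}\<close> by blast
    ultimately show ?thesis
      using singleton_induced_subgraph[OF two, of v] by (intro exI[of _ "{v}"]) simp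
  next
    case False
    then have "E \<noteq> {}"
      using assms(3) by (auto simp: avg_degree_def)
    then obtain e where "e \<in> E"
      by blast
    then have "e \<subseteq> V" "e \<noteq> {}"
      using assms(1) two by (auto simp: simple_graph_def)
    have "ln d \<le> ln (card V)"
      using False avg_degree_less_card[OF assms(1) \<open>V \<noteq> {}\<close>] assms(3) by simp
    then have "d / 80 * (ln d / ln (card V)) \<le> 16 / 80 * 1"
      using False assms(4) \<open>0 < ln (card V)\<close> by (intro mult_mono) auto
    moreover have "1 \<le> d powr (3/2)"
      using False by (intro ge_one_powr_ge_zero) auto
    ultimately show ?thesis
      using edge_induced_subgraph[OF two \<open>e \<in> E\<close>] \<open>e \<subseteq> V\<close> \<open>e \<noteq> {}\<close>
      by (intro exI[of _ e]) auto
  qed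
qed

theorem lemma7p2:
  "\<exists>c::real. c > 0 \<and>
     (\<forall>(V::nat set) E (n::nat) (d::real).
        simple_graph V E \<longrightarrow> card V = n \<longrightarrow> n \<ge> 2 \<longrightarrow>
        d \<ge> (ln (real n)) ^ 4 \<longrightarrow> avg_degree V E = d \<longrightarrow>
        (\<exists>U. U \<subseteq> V \<and> U \<noteq> {} \<and>
           avg_degree U (induced_edges E U) \<ge> c * ln d / ln (real n) * d \<and>
           real (max_degree U (induced_edges E U)) \<le> 2 * d powr (3/2)))"
proof (intro exI[of _ "1/80"] conjI allI impI)
  fix V :: "nat set" and E n and d :: real
  assume G: "simple_graph V E" and n: "card V = n" "n \<ge> 2" and d: "avg_degree V E = d"
  have "\<exists>U\<subseteq>V. U \<noteq> {} \<and> d * ln d / (80 * ln n) \<le> avg_degree U (induced_edges E U)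
      \<and> max_degree U (induced_edges E U) \<le> 2 * d powr (3/2)"
  proof (cases "d < 16")
    case True
    then show ?thesis
      using sparse_induced_subgraph_bounded_degree[OF G _ d] n by simp
  next
    case False
    then show ?thesis
      using dense_induced_subgraph_bounded_degree[OF G] d n by simp
  qed
  moreover have "1/80 * ln d / ln n * d = d * ln d / (80 * ln n)"
    by simp
  ultimately show "\<exists>U. U \<subseteq> V \<and> U \<noteq> {} \<and>
      avg_degree U (induced_edges E U) \<ge> 1/80 * ln d / ln n * d \<and>
      real (max_degree U (induced_edges E U)) \<le> 2 * d powr (3/2)"
    by (metis (no_types, lifting))
qed simp

end
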